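(* Let $f:\mathbb{R}^d\to\mathbb{R}$ be convex and $L$-smooth and let $\gamma>0$. Consider the iterates $z_0=x_0\in\mathbb{R}^d$ and, for $k\ge0$, $$y_k=(1-c_{k+1})x_k+c_{k+1}z_k,\qquad z_{k+1}=z_k-\rho_k\nabla f(y_k),\qquad x_{k+1}=(1-c_{k+1})x_k+c_{k+1}z_{k+1},$$ with $c_{k+1}=\frac{2}{k+2}$ and $\rho_k=\frac{k+1}{\gamma L}$. Then for every $k\ge0$, $$-f(y_k)\le -f(x_{k+1})-2L\left(\frac{\gamma}{(k+1)^{\overline{2}}}-\frac{1}{(k+2)^2}\right)\|z_{k+1}-z_k\|^2,$$ where $(k+1)^{\overline 2}=(k+1)(k+2)$.
   Context: $L$-smooth means $f$ is differentiable and $\|\nabla f(x)-\nabla f(y)\|\le L\|x-y\|$ for all $x,y$. *)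

theory Defs
  imports "HOL-Analysis.Analysis"
begin

definition L_smooth :: "real \<Rightarrow> ('a::euclidean_space \<Rightarrow> real) \<Rightarrow> ('a \<Rightarrow> 'a) \<Rightarrow> bool" where
  "L_smooth L f grad \<longleftrightarrow>
     (\<forall>x. (f has_derivative (\<lambda>h. grad x \<bullet> h)) (at x)) \<and>
     (\<forall>x y. norm (grad x - grad y) \<le> L * norm (x - y))"

end

theory Submission
  imports Defs
begin

text \<open>The update of the x-sequence is a step along the gradient direction:
  \<open>x (k+1) - y k = c (k+1) (z (k+1) - z k) = - c (k+1) \<rho> k grad (y k)\<close>.
  The quadratic upper bound of an L-smooth function along this step gives the claim.\<close>

lemma L_smooth_quadratic_upper_bound:
  fixes f :: "'a::euclidean_space \<Rightarrow> real"
  assumes "L_smooth L f grad"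
  shows "f (y + h) \<le> f y + grad y \<bullet> h + L / 2 * (norm h)\<^sup>2"
proof -
  have D: "\<And>x. (f has_derivative (\<lambda>v. grad x \<bullet> v)) (at x)"
    and Lip: "\<And>x y. norm (grad x - grad y) \<le> L * norm (x - y)"
    using assms unfolding L_smooth_def by auto
  define g where "g t = f (y + t *\<^sub>R h) - t * (grad y \<bullet> h) - L / 2 * t\<^sup>2 * (norm h)\<^sup>2" for t
  have "g 1 \<le> g 0"
  proof (rule DERIV_nonpos_imp_nonincreasing[where f = g])
    fix t :: real
    assume "0 \<le> t"
    have "((\<lambda>t. y + t *\<^sub>R h) has_derivative (\<lambda>s. s *\<^sub>R h)) (at t)"
      by (auto intro!: derivative_eq_intros)
    from has_derivative_compose[OF this D]
    have f': "((\<lambda>t. f (y + t *\<^sub>R h)) has_real_derivative grad (y + t *\<^sub>R h) \<bullet> h) (at t)"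
      unfolding has_field_derivative_def
      by (simp add: mult.commute[of _ "grad (y + t *\<^sub>R h) \<bullet> h"])
    have g': "(g has_real_derivative
        grad (y + t *\<^sub>R h) \<bullet> h - grad y \<bullet> h - L * t * (norm h)\<^sup>2) (at t)"
      unfolding g_def by (rule derivative_eq_intros f' | simp)+
    have "grad (y + t *\<^sub>R h) \<bullet> h - grad y \<bullet> h = (grad (y + t *\<^sub>R h) - grad y) \<bullet> h"
      by (simp add: inner_diff_left)
    also have "\<dots> \<le> norm (grad (y + t *\<^sub>R h) - grad y) * norm h"
      by (rule norm_cauchy_schwarz)
    also have "\<dots> \<le> L * norm (t *\<^sub>R h) * norm h"
      using Lip[of "y + t *\<^sub>R h" y] by (simp add: mult_right_mono)
    also have "\<dots> = L * t * (norm h)\<^sup>2"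
      using \<open>0 \<le> t\<close> by (simp add: power2_eq_square)
    finally show "\<exists>g't. (g has_real_derivative g't) (at t) \<and> g't \<le> 0"
      using g' by auto
  qed simp
  then show ?thesis
    unfolding g_def by simp
qed

lemma L_smooth_gradient_step_decrease:
  fixes f :: "'a::euclidean_space \<Rightarrow> real"
  assumes "L_smooth L f grad" and "R \<noteq> 0" and "d = - R *\<^sub>R grad y"
  shows "f (y + C *\<^sub>R d) \<le> f y - (C / R - L * C\<^sup>2 / 2) * (norm d)\<^sup>2"
proof -
  have "grad y = - (1 / R) *\<^sub>R d"
    using assms(2,3) by simp
  then have "grad y \<bullet> (C *\<^sub>R d) = - (C / R) * (norm d)\<^sup>2"
    by (simp add: power2_norm_eq_inner)
  moreover have "(norm (C *\<^sub>R d))\<^sup>2 = C\<^sup>2 * (norm d)\<^sup>2"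
    by (simp add: power_mult_distrib)
  ultimately show ?thesis
    using L_smooth_quadratic_upper_bound[OF assms(1), of y "C *\<^sub>R d"]
    by (simp add: algebra_simps)
qed

theorem lemma22:
  fixes f :: "'a::euclidean_space \<Rightarrow> real" and grad :: "'a \<Rightarrow> 'a"
    and L \<gamma> :: real and x y z :: "nat \<Rightarrow> 'a" and c \<rho> :: "nat \<Rightarrow> real"
  assumes cvx: "convex_on UNIV f"
    and smooth: "L_smooth L f grad"
    and Lpos: "L > 0"
    and gpos: "\<gamma> > 0"
    and c_def: "\<And>k. c (k + 1) = 2 / (real k + 2)"
    and rho_def: "\<And>k. \<rho> k = (real k + 1) / (\<gamma> * L)"
    and z0: "z 0 = x 0"
    and y_def: "\<And>k. y k = (1 - c (k + 1)) *\<^sub>R x k + c (k + 1) *\<^sub>R z k"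
    and z_step: "\<And>k. z (k + 1) = z k - \<rho> k *\<^sub>R grad (y k)"
    and x_step: "\<And>k. x (k + 1) = (1 - c (k + 1)) *\<^sub>R x k + c (k + 1) *\<^sub>R z (k + 1)"
  shows "- f (y k) \<le> - f (x (k + 1))
           - 2 * L * (\<gamma> / ((real k + 1) * (real k + 2)) - 1 / (real k + 2)^2)
               * (norm (z (k + 1) - z k))^2"
proof -
  define d where "d = z (k + 1) - z k"
  have x_next: "x (k + 1) = y k + c (k + 1) *\<^sub>R d"
    unfolding x_step y_def d_def by (simp add: algebra_simps)
  have "d = - \<rho> k *\<^sub>R grad (y k)"
    unfolding d_def using z_step[of k] by simp
  moreover have "\<rho> k \<noteq> 0"
    using rho_def[of k] Lpos gpos by simp
  ultimately have decrease: "f (x (k + 1))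
      \<le> f (y k) - (c (k + 1) / \<rho> k - L * (c (k + 1))\<^sup>2 / 2) * (norm d)\<^sup>2"
    unfolding x_next using L_smooth_gradient_step_decrease[OF smooth] by blast
  have "c (k + 1) / \<rho> k = 2 * L * (\<gamma> / ((real k + 1) * (real k + 2)))"
    unfolding c_def rho_def using Lpos gpos by (simp add: field_simps)
  moreover have "L * (c (k + 1))\<^sup>2 / 2 = 2 * L * (1 / (real k + 2)^2)"
    unfolding c_def by (simp add: power_divide)
  ultimately have coeff: "c (k + 1) / \<rho> k - L * (c (k + 1))\<^sup>2 / 2
      = 2 * L * (\<gamma> / ((real k + 1) * (real k + 2)) - 1 / (real k + 2)^2)"
    by (simp only: right_diff_distrib)
  show ?thesis
    using decrease unfolding coeff d_def by linarith
qed

end
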